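(* Let $(X,\tau)$ be a topological space with an operation $\gamma$ on $\tau$ and $A\subseteq X$. Then (1) $A$ is $\gamma^{*}$-semi-open if and only if $A\cap sbd_{\gamma^{*}}(A)=\emptyset$; (2) $A$ is $\gamma^{*}$-semi-closed if and only if $sbd_{\gamma^{*}}(A)\subseteq A$.
   Context: An operation on $\tau$ is a map $\gamma:\tau\to P(X)$, $V\mapsto V^\gamma$, with $V\subseteq V^\gamma$ for every $V\in\tau$. For $A\subseteq X$, $int_\gamma(A)=\{x\in A: \text{there is an open } N \text{ with } x\in N,\ N^\gamma\subseteq A\}$; $A$ is $\gamma$-open iff $A=int_\gamma(A)$. $cl_\gamma(A)$ is the set of $x\in X$ such that $U^\gamma\cap A\neq\emptyset$ for every open $U\ni x$. $A$ is $\gamma^{*}$-semi-open if there is a $\gamma$-open set $O$ with $O\subseteq A\subseteq cl_\gamma(O)$; $A$ is $\gamma^{*}$-semi-closed if $X-A$ is $\gamma^{*}$-semi-open. $scl_{\gamma^{*}}(A)$ is the intersection of all $\gamma^{*}$-semi-closed sets containing $A$; $sbd_{\gamma^{*}}(A)=scl_{\gamma^{*}}(A)\cap scl_{\gamma^{*}}(X-A)$. *)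

theory Defs
  imports "HOL-Analysis.Analysis"
begin

text \<open>An operation on the open sets of a topology T (X = topspace T):
  a map gamma from open sets to subsets of X with V contained in gamma V.
  gamma is a total HOL function; only its values on open sets matter.\<close>
definition operation :: "'a topology \<Rightarrow> ('a set \<Rightarrow> 'a set) \<Rightarrow> bool" where
  "operation T \<gamma> \<longleftrightarrow> (\<forall>V. openin T V \<longrightarrow> V \<subseteq> \<gamma> V \<and> \<gamma> V \<subseteq> topspace T)"

definition gamma_int :: "'a topology \<Rightarrow> ('a set \<Rightarrow> 'a set) \<Rightarrow> 'a set \<Rightarrow> 'a set" where
  "gamma_int T \<gamma> A = {x \<in> A. \<exists>N. openin T N \<and> x \<in> N \<and> \<gamma> N \<subseteq> A}"

definition gamma_open :: "'a topology \<Rightarrow> ('a set \<Rightarrow> 'a set) \<Rightarrow> 'a set \<Rightarrow> bool" where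
  "gamma_open T \<gamma> A \<longleftrightarrow> A = gamma_int T \<gamma> A"

definition gamma_cl :: "'a topology \<Rightarrow> ('a set \<Rightarrow> 'a set) \<Rightarrow> 'a set \<Rightarrow> 'a set" where
  "gamma_cl T \<gamma> A = {x \<in> topspace T. \<forall>U. openin T U \<and> x \<in> U \<longrightarrow> \<gamma> U \<inter> A \<noteq> {}}"

definition gamma_star_semi_open :: "'a topology \<Rightarrow> ('a set \<Rightarrow> 'a set) \<Rightarrow> 'a set \<Rightarrow> bool" where
  "gamma_star_semi_open T \<gamma> A \<longleftrightarrow> (\<exists>U. gamma_open T \<gamma> U \<and> U \<subseteq> A \<and> A \<subseteq> gamma_cl T \<gamma> U)"

definition gamma_star_semi_closed :: "'a topology \<Rightarrow> ('a set \<Rightarrow> 'a set) \<Rightarrow> 'a set \<Rightarrow> bool" where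
  "gamma_star_semi_closed T \<gamma> A \<longleftrightarrow> A \<subseteq> topspace T \<and> gamma_star_semi_open T \<gamma> (topspace T - A)"

definition gamma_star_scl :: "'a topology \<Rightarrow> ('a set \<Rightarrow> 'a set) \<Rightarrow> 'a set \<Rightarrow> 'a set" where
  "gamma_star_scl T \<gamma> A = \<Inter>{F. gamma_star_semi_closed T \<gamma> F \<and> A \<subseteq> F}"

definition gamma_star_sbd :: "'a topology \<Rightarrow> ('a set \<Rightarrow> 'a set) \<Rightarrow> 'a set \<Rightarrow> 'a set" where
  "gamma_star_sbd T \<gamma> A = gamma_star_scl T \<gamma> A \<inter> gamma_star_scl T \<gamma> (topspace T - A)"

end

theory Submission
  imports Defs
begin

text \<open>Arbitrary unions of \<open>\<gamma>\<^sup>*\<close>-semi-open sets are \<open>\<gamma>\<^sup>*\<close>-semi-open, so \<open>scl\<^sub>\<gamma>\<^sub>*\<close> is a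
  genuine closure operator: \<open>scl\<^sub>\<gamma>\<^sub>* A = A\<close> exactly for semi-closed \<open>A\<close>. Since
  \<open>sbd\<^sub>\<gamma>\<^sub>* A\<close> is symmetric in \<open>A\<close> and its complement and contains \<open>scl\<^sub>\<gamma>\<^sub>* A - A\<close>,
  \<open>sbd\<^sub>\<gamma>\<^sub>* A \<subseteq> A\<close> says precisely that \<open>scl\<^sub>\<gamma>\<^sub>* A = A\<close>; the statement about semi-open sets is
  the same statement for the complement. None of this uses the axioms of an operation.\<close>

lemma gamma_open_Union:
  assumes "\<And>U. U \<in> \<U> \<Longrightarrow> gamma_open T \<gamma> U"
  shows "gamma_open T \<gamma> (\<Union>\<U>)"
  unfolding gamma_open_def
proof
  show "\<Union>\<U> \<subseteq> gamma_int T \<gamma> (\<Union>\<U>)"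
  proof
    fix x assume "x \<in> \<Union>\<U>"
    then obtain U where U: "U \<in> \<U>" "x \<in> U" by blast
    then have "x \<in> gamma_int T \<gamma> U" using assms unfolding gamma_open_def by blast
    then obtain N where "openin T N" "x \<in> N" "\<gamma> N \<subseteq> U" unfolding gamma_int_def by blast
    then show "x \<in> gamma_int T \<gamma> (\<Union>\<U>)" using U unfolding gamma_int_def by blast
  qed
qed (auto simp: gamma_int_def)

lemma gamma_cl_mono: "U \<subseteq> V \<Longrightarrow> gamma_cl T \<gamma> U \<subseteq> gamma_cl T \<gamma> V"
  unfolding gamma_cl_def by blast

lemma gamma_star_semi_open_Union:
  assumes "\<And>A. A \<in> \<A> \<Longrightarrow> gamma_star_semi_open T \<gamma> A"
  shows "gamma_star_semi_open T \<gamma> (\<Union>\<A>)"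
proof -
  obtain f where f: "\<And>A. A \<in> \<A> \<Longrightarrow>
      gamma_open T \<gamma> (f A) \<and> f A \<subseteq> A \<and> A \<subseteq> gamma_cl T \<gamma> (f A)"
    using assms unfolding gamma_star_semi_open_def by metis
  let ?U = "\<Union>(f ` \<A>)"
  have "gamma_open T \<gamma> ?U" using f by (intro gamma_open_Union) blast
  moreover have "?U \<subseteq> \<Union>\<A>" using f by blast
  moreover have "\<Union>\<A> \<subseteq> gamma_cl T \<gamma> ?U"
  proof
    fix x assume "x \<in> \<Union>\<A>"
    then obtain A where A: "A \<in> \<A>" "x \<in> A" by blast
    then have "x \<in> gamma_cl T \<gamma> (f A)" using f by blast
    moreover have "f A \<subseteq> ?U" using A by blast
    ultimately show "x \<in> gamma_cl T \<gamma> ?U" using gamma_cl_mono by blast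
  qed
  ultimately show ?thesis unfolding gamma_star_semi_open_def by blast
qed

lemma gamma_star_semi_closed_topspace: "gamma_star_semi_closed T \<gamma> (topspace T)"
  unfolding gamma_star_semi_closed_def gamma_star_semi_open_def gamma_open_def gamma_int_def
  by auto

lemma gamma_star_semi_open_iff_closed_Diff:
  assumes "A \<subseteq> topspace T"
  shows "gamma_star_semi_open T \<gamma> A \<longleftrightarrow> gamma_star_semi_closed T \<gamma> (topspace T - A)"
  using assms by (simp add: gamma_star_semi_closed_def Diff_Diff_Int Int_absorb1)

lemma gamma_star_scl_subset_topspace:
  "A \<subseteq> topspace T \<Longrightarrow> gamma_star_scl T \<gamma> A \<subseteq> topspace T"
  unfolding gamma_star_scl_def using gamma_star_semi_closed_topspace by blast

lemma gamma_star_scl_superset: "A \<subseteq> gamma_star_scl T \<gamma> A"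
  unfolding gamma_star_scl_def by blast

lemma gamma_star_semi_closed_scl:
  assumes "A \<subseteq> topspace T"
  shows "gamma_star_semi_closed T \<gamma> (gamma_star_scl T \<gamma> A)"
proof -
  let ?\<F> = "{F. gamma_star_semi_closed T \<gamma> F \<and> A \<subseteq> F}"
  have "topspace T - gamma_star_scl T \<gamma> A = \<Union>((\<lambda>F. topspace T - F) ` ?\<F>)"
    unfolding gamma_star_scl_def by blast
  moreover have "gamma_star_semi_open T \<gamma> (\<Union>((\<lambda>F. topspace T - F) ` ?\<F>))"
    by (rule gamma_star_semi_open_Union) (auto simp: gamma_star_semi_closed_def)
  ultimately show ?thesis
    using gamma_star_scl_subset_topspace[OF assms]
    unfolding gamma_star_semi_closed_def by simp
qed

lemma gamma_star_scl_eq_iff: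
  assumes "A \<subseteq> topspace T"
  shows "gamma_star_scl T \<gamma> A = A \<longleftrightarrow> gamma_star_semi_closed T \<gamma> A"
proof
  show "gamma_star_scl T \<gamma> A = A \<Longrightarrow> gamma_star_semi_closed T \<gamma> A"
    using gamma_star_semi_closed_scl[OF assms, of \<gamma>] by simp
  show "gamma_star_semi_closed T \<gamma> A \<Longrightarrow> gamma_star_scl T \<gamma> A = A"
    unfolding gamma_star_scl_def by blast
qed

lemma gamma_star_sbd_Diff:
  "A \<subseteq> topspace T \<Longrightarrow> gamma_star_sbd T \<gamma> (topspace T - A) = gamma_star_sbd T \<gamma> A"
  by (simp add: gamma_star_sbd_def Diff_Diff_Int Int_absorb2 Int_commute)

lemma gamma_star_sbd_subset_topspace:
  "A \<subseteq> topspace T \<Longrightarrow> gamma_star_sbd T \<gamma> A \<subseteq> topspace T"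
  unfolding gamma_star_sbd_def using gamma_star_scl_subset_topspace by blast

lemma gamma_star_semi_closed_iff_sbd_subset:
  assumes "A \<subseteq> topspace T"
  shows "gamma_star_semi_closed T \<gamma> A \<longleftrightarrow> gamma_star_sbd T \<gamma> A \<subseteq> A"
proof -
  have "gamma_star_sbd T \<gamma> A \<subseteq> A \<longleftrightarrow> gamma_star_scl T \<gamma> A = A"
    using gamma_star_scl_superset[of A T \<gamma>]
      gamma_star_scl_superset[of "topspace T - A" T \<gamma>]
      gamma_star_scl_subset_topspace[OF assms, of \<gamma>]
    unfolding gamma_star_sbd_def by blast
  then show ?thesis using gamma_star_scl_eq_iff[OF assms] by simp
qed

lemma gamma_star_semi_open_iff_disjoint_sbd:
  assumes "A \<subseteq> topspace T"
  shows "gamma_star_semi_open T \<gamma> A \<longleftrightarrow> A \<inter> gamma_star_sbd T \<gamma> A = {}"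
proof -
  have "gamma_star_semi_open T \<gamma> A \<longleftrightarrow> gamma_star_sbd T \<gamma> A \<subseteq> topspace T - A"
    using assms gamma_star_semi_open_iff_closed_Diff[OF assms]
      gamma_star_semi_closed_iff_sbd_subset[of "topspace T - A" T \<gamma>]
    by (simp add: gamma_star_sbd_Diff)
  then show ?thesis using gamma_star_sbd_subset_topspace[OF assms, of \<gamma>] by blast
qed

theorem theorem3p19:
  fixes T :: "'a topology" and \<gamma> :: "'a set \<Rightarrow> 'a set" and A :: "'a set"
  assumes "operation T \<gamma>" and "A \<subseteq> topspace T"
  shows "(gamma_star_semi_open T \<gamma> A \<longleftrightarrow> A \<inter> gamma_star_sbd T \<gamma> A = {})
       \<and> (gamma_star_semi_closed T \<gamma> A \<longleftrightarrow> gamma_star_sbd T \<gamma> A \<subseteq> A)"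
  using gamma_star_semi_open_iff_disjoint_sbd[OF assms(2)]
    gamma_star_semi_closed_iff_sbd_subset[OF assms(2)]
  by blast

end
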